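(* Let $\boldsymbol{x}=[i,v]^{\intercal}$ be any solution of the switched system, and let $\boldsymbol{x}_p=[i_p,v_p]^{\intercal}$ be its unique $T$-periodic solution. Then the averages $\langle v\rangle$ and $\langle i\rangle$ exist, and $$\langle v\rangle=\tfrac12\bigl(v_p(0)+v_p(T/2)\bigr)=\frac{V_{dc}}{2},$$ $$\langle i\rangle=\frac{2C}{T}\bigl(V_{dc}-2v_p(0)\bigr),$$ and $$\Bigl|\langle i\rangle-\frac{V_{dc}}{2R}\Bigr|\le\frac{T}{2RC}\max_{t\in[0,T/2]}|i_p(t)| .$$
   Context: Let $R,L,C,V_{dc},T>0$. Let $\boldsymbol{x}(t)=[i(t),v(t)]^{\intercal}$. Define $$A_1=\begin{bmatrix}-\frac RL & -\frac1L\\ \frac1C & 0\end{bmatrix},\quad A_2=\begin{bmatrix}-\frac RL & \frac1L\\ -\frac1C & 0\end{bmatrix},\quad \boldsymbol{b}_1=\begin{bmatrix}\frac{V_{dc}}L\\ 0\end{bmatrix}.$$ The switched system on $t\ge0$ is: $\boldsymbol{x}'=A_1\boldsymbol{x}+\boldsymbol{b}_1$ on each interval $[(k-1)T,(k-1)T+\frac T2]$ and $\boldsymbol{x}'=A_2\boldsymbol{x}$ on each interval $[(k-1)T+\frac T2,kT]$, $k=1,2,\dots$; solutions are continuous functions on $[0,\infty)$. The system has a unique $T$-periodic solution $\boldsymbol{x}_p$, with $\boldsymbol{x}_p(0)=\left(I-\mathrm{e}^{\frac{T}{2}A_2}\mathrm{e}^{\frac{T}{2}A_1}\right)^{-1}\mathrm{e}^{\frac{T}{2}A_2}A_1^{-1}\left(\mathrm{e}^{\frac{T}{2}A_1}-I\right)\boldsymbol{b}_1$.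 For a function $f$ on $[0,\infty)$, its average is $\langle f\rangle=\lim_{\tau\to\infty}\frac1\tau\int_0^\tau f(t)\,dt$. *)

theory Defs
  imports "HOL-Analysis.Analysis"
begin

text \<open>State x = [i, v]: component 1 is the current i, component 2 the voltage v.\<close>

definition A1 :: "real \<Rightarrow> real \<Rightarrow> real \<Rightarrow> real^2^2" where
  "A1 R L C = vector [vector [- R / L, - 1 / L], vector [1 / C, 0]]"

definition A2 :: "real \<Rightarrow> real \<Rightarrow> real \<Rightarrow> real^2^2" where
  "A2 R L C = vector [vector [- R / L, 1 / L], vector [- 1 / C, 0]]"

definition b1 :: "real \<Rightarrow> real \<Rightarrow> real^2" where
  "b1 L Vdc = vector [Vdc / L, 0]"

definition is_switched_solution ::
  "real \<Rightarrow> real \<Rightarrow> real \<Rightarrow> real \<Rightarrow> real \<Rightarrow> (real \<Rightarrow> real^2) \<Rightarrow> bool" where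
  "is_switched_solution R L C Vdc T x \<longleftrightarrow>
     continuous_on {0..} x \<and>
     (\<forall>k::nat. \<forall>t\<in>{real k * T .. real k * T + T / 2}.
        (x has_vector_derivative (A1 R L C *v x t + b1 L Vdc))
          (at t within {real k * T .. real k * T + T / 2})) \<and>
     (\<forall>k::nat. \<forall>t\<in>{real k * T + T / 2 .. real (Suc k) * T}.
        (x has_vector_derivative (A2 R L C *v x t))
          (at t within {real k * T + T / 2 .. real (Suc k) * T}))"

definition has_average :: "(real \<Rightarrow> real) \<Rightarrow> real \<Rightarrow> bool" where
  "has_average f a \<longleftrightarrow>
     ((\<lambda>\<tau>. (1 / \<tau>) * integral {0..\<tau>} f) \<longlongrightarrow> a) at_top"

end

theory Submission
  imports Defs
begin

text \<open>Both the difference of two solutions and the pair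
  \<open>(i(t) - i(t + T/2), v(t) + v(t + T/2) - Vdc)\<close> built from one solution solve the unforced
  circuit with switch sign \<open>\<plusminus>1\<close> on alternate half periods. Its energy
  \<open>L i\<^sup>2/2 + C v\<^sup>2/2\<close> decreases at rate \<open>R i\<^sup>2\<close>, which forces \<open>i \<rightarrow> 0\<close>; then \<open>v \<rightarrow> 0\<close> as well,
  since a voltage bounded away from 0 would drive the current by a fixed amount over every half
  period. Hence every solution approaches the periodic one, and the periodic solution is
  half-wave symmetric: \<open>i\<^sub>p(t + T/2) = i\<^sub>p(t)\<close>, \<open>v\<^sub>p(t + T/2) = Vdc - v\<^sub>p(t)\<close>. Averages of periodic
  functions exist and survive vanishing perturbations, and integrating the state equations over
  the first half period yields the averages; the error bound follows from
  \<open>|Vdc/2 - v\<^sub>p| \<le> T max |i\<^sub>p| / (4C)\<close> on \<open>[0, T/2]\<close>.\<close>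

section \<open>Monotonicity from piecewise derivatives\<close>

definition grid_interval :: "real \<Rightarrow> nat \<Rightarrow> real set" where
  "grid_interval h j = {real j * h .. real (Suc j) * h}"

lemma DERIV_nonpos_imp_nonincreasing_within:
  fixes g :: "real \<Rightarrow> real"
  assumes "a \<le> b"
    and "\<And>t. t \<in> {a..b} \<Longrightarrow> (g has_real_derivative g' t) (at t within {a..b})"
    and "\<And>t. t \<in> {a..b} \<Longrightarrow> g' t \<le> 0"
  shows "g b \<le> g a"
proof -
  obtain t where t: "t \<in> {a..b}" "g b - g a = g' t * (b - a)"
    using mvt_very_simple[of a b g "\<lambda>t. (*) (g' t)"] assms(1,2)
    by (auto simp: has_field_derivative_def)
  moreover have "g' t * (b - a) \<le> 0"
    using assms(1) assms(3)[OF t(1)] by (simp add: mult_nonpos_nonneg)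
  ultimately show ?thesis by linarith
qed

lemma grid_piecewise_antimono:
  fixes g :: "real \<Rightarrow> real"
  assumes h: "h > 0" and ab: "0 \<le> a" "a \<le> b"
    and piece: "\<And>j s t. s \<in> grid_interval h j \<Longrightarrow> t \<in> grid_interval h j \<Longrightarrow>
                   a \<le> s \<Longrightarrow> s \<le> t \<Longrightarrow> t \<le> b \<Longrightarrow> g t \<le> g s"
  shows "g b \<le> g a"
proof -
  have "g t \<le> g a" if "a \<le> t" "t \<le> b" "t \<le> real n * h" for n t
    using that
  proof (induction n arbitrary: t)
    case 0
    then have "t = a" using ab by linarith
    then show ?case by simp
  next
    case (Suc n)
    show ?case
    proof (cases "t \<le> real n * h")
      case True
      then show ?thesis using Suc by blast
    next
      case False
      define s where "s = max a (real n * h)"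
      have "s \<in> grid_interval h n" "t \<in> grid_interval h n"
        using False Suc.prems by (auto simp: grid_interval_def s_def)
      then have "g t \<le> g s"
        by (rule piece) (use False Suc.prems in \<open>auto simp: s_def\<close>)
      moreover have "g s \<le> g a"
        using Suc.IH[of "real n * h"] Suc.prems False by (auto simp: s_def max_def)
      ultimately show ?thesis by linarith
    qed
  qed
  moreover obtain n where "b / h \<le> real n"
    using real_arch_simple by blast
  then have "b \<le> real n * h"
    using h by (simp add: field_simps)
  ultimately show ?thesis using ab by auto
qed

lemma grid_DERIV_nonpos_imp_nonincreasing:
  fixes g :: "real \<Rightarrow> real"
  assumes h: "h > 0" and ab: "0 \<le> a" "a \<le> b"
    and deriv: "\<And>j t. t \<in> grid_interval h j \<Longrightarrow>
                  (g has_real_derivative g' j t) (at t within grid_interval h j)"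
    and nonpos: "\<And>j t. t \<in> grid_interval h j \<Longrightarrow> a \<le> t \<Longrightarrow> t \<le> b \<Longrightarrow> g' j t \<le> 0"
  shows "g b \<le> g a"
proof (rule grid_piecewise_antimono[OF h ab])
  fix j s t
  assume st: "s \<in> grid_interval h j" "t \<in> grid_interval h j" "a \<le> s" "s \<le> t" "t \<le> b"
  then have sub: "{s..t} \<subseteq> grid_interval h j"
    by (auto simp: grid_interval_def)
  show "g t \<le> g s"
  proof (rule DERIV_nonpos_imp_nonincreasing_within[OF st(4)])
    fix u assume u: "u \<in> {s..t}"
    then show "(g has_real_derivative g' j u) (at u within {s..t})"
      using DERIV_subset[OF deriv sub] sub by blast
    show "g' j u \<le> 0"
      using nonpos[of u j] u sub st by auto
  qed
qed

lemma grid_DERIV_bound_imp_lipschitz: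
  fixes g :: "real \<Rightarrow> real"
  assumes h: "h > 0" and ab: "0 \<le> a" "a \<le> b"
    and deriv: "\<And>j t. t \<in> grid_interval h j \<Longrightarrow>
                  (g has_real_derivative g' j t) (at t within grid_interval h j)"
    and bound: "\<And>j t. t \<in> grid_interval h j \<Longrightarrow> a \<le> t \<Longrightarrow> t \<le> b \<Longrightarrow> \<bar>g' j t\<bar> \<le> B"
  shows "\<bar>g b - g a\<bar> \<le> B * (b - a)"
proof -
  have "(\<lambda>t. g t - B * t) b \<le> (\<lambda>t. g t - B * t) a"
    by (rule grid_DERIV_nonpos_imp_nonincreasing[OF h ab, where g' = "\<lambda>j t. g' j t - B * 1"])
      (use bound in \<open>auto intro!: DERIV_diff deriv DERIV_cmult DERIV_ident simp: abs_le_iff\<close>)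
  moreover have "(\<lambda>t. - g t - B * t) b \<le> (\<lambda>t. - g t - B * t) a"
    by (rule grid_DERIV_nonpos_imp_nonincreasing[OF h ab, where g' = "\<lambda>j t. - g' j t - B * 1"])
      (use bound in \<open>auto intro!: DERIV_diff DERIV_minus deriv DERIV_cmult DERIV_ident
                          simp: abs_le_iff\<close>)
  ultimately show ?thesis
    by (simp add: algebra_simps abs_le_iff)
qed

lemma grid_interval_within:
  assumes "h > 0" "0 \<le> t"
  obtains j where "t \<le> real j * h" "real (Suc j) * h \<le> t + 2 * h"
proof
  define j where "j = nat \<lceil>t / h\<rceil>"
  have "real j = of_int \<lceil>t / h\<rceil>"
    using assms by (simp add: j_def)
  then have "t / h \<le> real j" "real j \<le> t / h + 1"
    by linarith+
  then show "t \<le> real j * h" "real (Suc j) * h \<le> t + 2 * h"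
    using assms by (simp_all add: field_simps)
qed

section \<open>Periodic functions and averages\<close>

lemma periodic_add_nat_multiple:
  fixes f :: "real \<Rightarrow> 'a"
  assumes per: "\<forall>t\<ge>0. f (t + T) = f t" and "T \<ge> 0" "t \<ge> 0"
  shows "f (t + real n * T) = f t"
proof (induction n)
  case (Suc n)
  have "f (t + real (Suc n) * T) = f ((t + real n * T) + T)"
    by (simp add: algebra_simps)
  also have "\<dots> = f (t + real n * T)"
    using per assms(2,3) by simp
  finally show ?case using Suc by simp
qed simp

lemma periodic_tendsto_zero_imp_zero:
  fixes f :: "real \<Rightarrow> real"
  assumes per: "\<forall>t\<ge>0. f (t + T) = f t" and "T > 0"
    and lim: "(f \<longlongrightarrow> 0) at_top" and "t \<ge> 0"
  shows "f t = 0"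
proof -
  have "filterlim (\<lambda>n. t + real n * T) at_top sequentially"
    by (intro filterlim_tendsto_add_at_top[OF tendsto_const]
          filterlim_at_top_mult_tendsto_pos[OF tendsto_const \<open>T > 0\<close> filterlim_real_sequentially])
  with lim have "(\<lambda>n. f (t + real n * T)) \<longlonglongrightarrow> 0"
    by (rule filterlim_compose)
  then show ?thesis
    using periodic_add_nat_multiple[OF per] assms(2,4) by (simp add: LIMSEQ_const_iff)
qed

lemma integrable_on_Icc_of_continuous_on_nonneg:
  fixes f :: "real \<Rightarrow> real"
  shows "continuous_on {0..} f \<Longrightarrow> 0 \<le> a \<Longrightarrow> f integrable_on {a..b}"
  by (rule integrable_continuous_real) (auto intro: continuous_on_subset)

lemma has_average_add:
  fixes f g :: "real \<Rightarrow> real"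
  assumes "has_average f a" "has_average g b" "continuous_on {0..} f" "continuous_on {0..} g"
  shows "has_average (\<lambda>t. f t + g t) (a + b)"
  unfolding has_average_def
proof (rule Lim_transform_eventually)
  show "((\<lambda>\<tau>. 1 / \<tau> * integral {0..\<tau>} f + 1 / \<tau> * integral {0..\<tau>} g) \<longlongrightarrow> a + b) at_top"
    using assms(1,2) unfolding has_average_def by (rule tendsto_add)
  show "\<forall>\<^sub>F \<tau> in at_top. 1 / \<tau> * integral {0..\<tau>} f + 1 / \<tau> * integral {0..\<tau>} g
                        = 1 / \<tau> * integral {0..\<tau>} (\<lambda>t. f t + g t)"
    using integral_add[OF integrable_on_Icc_of_continuous_on_nonneg[OF assms(3)]
                          integrable_on_Icc_of_continuous_on_nonneg[OF assms(4)]]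
    by (simp add: distrib_left)
qed

lemma has_average_tendsto_zero:
  fixes g :: "real \<Rightarrow> real"
  assumes cont: "continuous_on {0..} g" and lim: "(g \<longlongrightarrow> 0) at_top"
  shows "has_average g 0"
  unfolding has_average_def tendsto_iff dist_real_def eventually_at_top_linorder
proof (intro allI impI)
  fix e :: real assume e: "e > 0"
  have "\<forall>\<^sub>F t in at_top. \<bar>g t\<bar> < e / 2"
    using tendsto_iff[THEN iffD1, OF lim, rule_format, of "e / 2"] e by (simp add: dist_real_def)
  then obtain t0 where t0: "t0 \<ge> 0" "\<And>t. t0 \<le> t \<Longrightarrow> \<bar>g t\<bar> \<le> e / 2"
    unfolding eventually_at_top_linorder by (metis less_imp_le max.cobounded1 max.cobounded2 order.trans)
  define M where "M = \<bar>integral {0..t0} g\<bar>"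
  show "\<exists>N. \<forall>\<tau>\<ge>N. \<bar>1 / \<tau> * integral {0..\<tau>} g - 0\<bar> < e"
  proof (intro exI allI impI)
    fix \<tau> assume "\<tau> \<ge> max t0 (max 1 (2 * M / e + 1))"
    then have \<tau>: "\<tau> \<ge> t0" "\<tau> > 0" "M < e / 2 * \<tau>"
      using e by (auto simp: field_simps)
    have "integral {0..\<tau>} g = integral {0..t0} g + integral {t0..\<tau>} g"
      using Henstock_Kurzweil_Integration.integral_combine[where a = 0 and c = t0 and b = \<tau> and f = g]
        integrable_on_Icc_of_continuous_on_nonneg[OF cont] \<tau> t0
      by auto
    moreover have "\<bar>integral {t0..\<tau>} g\<bar> \<le> e / 2 * (\<tau> - t0)"
      using integral_bound[where a = t0 and b = \<tau> and f = g and B = "e / 2"]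
        continuous_on_subset[OF cont] \<tau> t0 by auto
    moreover have "e / 2 * (\<tau> - t0) \<le> e / 2 * \<tau>"
      using e t0 by (intro mult_left_mono) auto
    ultimately have "\<bar>integral {0..\<tau>} g\<bar> < e * \<tau>"
      using \<tau>(3) unfolding M_def by linarith
    then show "\<bar>1 / \<tau> * integral {0..\<tau>} g - 0\<bar> < e"
      using \<tau>(2) by (simp add: abs_div pos_divide_less_eq)
  qed
qed

lemma integral_periodic_shift:
  fixes f :: "real \<Rightarrow> real"
  assumes per: "\<forall>t\<ge>0. f (t + T) = f t" and "T \<ge> 0"
  shows "integral {real n * T .. real n * T + s} f = integral {0..s} f"
proof -
  have "integral {0..s} (f \<circ> (+) (real n * T)) = integral {0 + real n * T .. s + real n * T} f"
    by (rule integral_shift_Icc_real)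
  moreover have "integral {0..s} (f \<circ> (+) (real n * T)) = integral {0..s} f"
    by (rule integral_cong)
      (use periodic_add_nat_multiple[OF per \<open>T \<ge> 0\<close>] in \<open>simp add: add.commute\<close>)
  ultimately show ?thesis by (simp add: add.commute)
qed

lemma integral_periodic_multiple:
  fixes f :: "real \<Rightarrow> real"
  assumes cont: "continuous_on {0..} f" and per: "\<forall>t\<ge>0. f (t + T) = f t" and "T \<ge> 0"
  shows "integral {0 .. real n * T} f = real n * integral {0..T} f"
proof (induction n)
  case (Suc n)
  have "integral {0 .. real n * T + T} f = integral {0 .. real n * T} f + integral {real n * T .. real n * T + T} f"
    using Henstock_Kurzweil_Integration.integral_combine[where a = 0 and c = "real n * T" and b = "real n * T + T" and f = f]
      integrable_on_Icc_of_continuous_on_nonneg[OF cont] \<open>T \<ge> 0\<close> by auto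
  then show ?case
    using Suc integral_periodic_shift[OF per \<open>T \<ge> 0\<close>, of n T] by (simp add: algebra_simps)
qed simp

lemma periodic_average_error:
  fixes f :: "real \<Rightarrow> real"
  assumes T: "T > 0" and cont: "continuous_on {0..} f" and per: "\<forall>t\<ge>0. f (t + T) = f t"
    and B: "\<And>t. t \<in> {0..T} \<Longrightarrow> \<bar>f t\<bar> \<le> B" and "\<tau> \<ge> T"
  shows "\<bar>1 / \<tau> * integral {0..\<tau>} f - integral {0..T} f / T\<bar>
           \<le> (B * T + \<bar>integral {0..T} f\<bar>) / \<tau>"
proof -
  define P where "P = integral {0..T} f"
  define n where "n = nat \<lfloor>\<tau> / T\<rfloor>"
  define s where "s = \<tau> - real n * T"
  have "real n = of_int \<lfloor>\<tau> / T\<rfloor>"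
    using assms(5) T by (simp add: n_def)
  then have "real n \<le> \<tau> / T" "\<tau> / T < real n + 1"
    by linarith+
  then have s: "0 \<le> s" "s \<le> T" "\<tau> = real n * T + s"
    using T by (auto simp: s_def field_simps)
  have "integral {0..\<tau>} f = integral {0 .. real n * T} f + integral {real n * T .. real n * T + s} f"
    unfolding s(3)
    using Henstock_Kurzweil_Integration.integral_combine[where a = 0 and c = "real n * T" and b = "real n * T + s" and f = f]
      integrable_on_Icc_of_continuous_on_nonneg[OF cont] T s by auto
  then have "integral {0..\<tau>} f = real n * P + integral {0..s} f"
    using integral_periodic_multiple[OF cont per] integral_periodic_shift[OF per] T
    by (simp add: P_def)
  then have eq: "1 / \<tau> * integral {0..\<tau>} f - P / T = (integral {0..s} f - P * s / T) / \<tau>"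
    using assms(5) T by (simp add: s(3) field_simps)
  have "\<bar>integral {0..s} f\<bar> \<le> B * T"
  proof -
    have "\<bar>integral {0..s} f\<bar> \<le> B * (s - 0)"
      using integral_bound[where a = 0 and b = s and f = f and B = B] continuous_on_subset[OF cont] B s
      by auto
    also have "\<dots> \<le> B * T"
      using B[of 0] T s by (intro mult_left_mono) auto
    finally show ?thesis .
  qed
  moreover have "\<bar>P * s / T\<bar> \<le> \<bar>P\<bar>"
  proof -
    have "\<bar>P * s / T\<bar> = \<bar>P\<bar> * (s / T)"
      using s T by (simp add: abs_mult)
    also have "\<dots> \<le> \<bar>P\<bar>"
      using s T by (intro mult_left_le) auto
    finally show ?thesis .
  qed
  ultimately have "\<bar>integral {0..s} f - P * s / T\<bar> \<le> B * T + \<bar>P\<bar>"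
    by linarith
  then show ?thesis
    using assms(5) T unfolding P_def[symmetric] eq by (simp add: divide_right_mono)
qed

lemma has_average_periodic:
  fixes f :: "real \<Rightarrow> real"
  assumes T: "T > 0" and cont: "continuous_on {0..} f" and per: "\<forall>t\<ge>0. f (t + T) = f t"
  shows "has_average f (integral {0..T} f / T)"
proof -
  define P where "P = integral {0..T} f"
  have "bounded (f ` {0..T})"
    by (intro compact_imp_bounded compact_continuous_image continuous_on_subset[OF cont]) auto
  then obtain B where B: "\<And>t. t \<in> {0..T} \<Longrightarrow> \<bar>f t\<bar> \<le> B"
    unfolding bounded_real by fastforce
  have "\<forall>\<^sub>F \<tau> in at_top. norm (1 / \<tau> * integral {0..\<tau>} f - P / T) \<le> (B * T + \<bar>P\<bar>) / \<tau>"
    using periodic_average_error[OF T cont per B] unfolding P_def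
    by (auto simp: eventually_at_top_linorder)
  moreover have "((\<lambda>\<tau>. (B * T + \<bar>P\<bar>) / \<tau>) \<longlongrightarrow> 0) at_top"
    by (intro tendsto_divide_0[OF tendsto_const] filterlim_at_top_imp_at_infinity filterlim_ident)
  ultimately show ?thesis
    unfolding has_average_def P_def[symmetric] by (subst Lim_null) (rule Lim_null_comparison)
qed

section \<open>The unforced switched circuit\<close>

lemma abs_le_one_plus_square: "\<bar>x::real\<bar> \<le> 1 + x\<^sup>2"
proof -
  have "0 \<le> (\<bar>x\<bar> - 1)\<^sup>2" by simp
  then have "2 * \<bar>x\<bar> \<le> 1 + x\<^sup>2" by (simp add: power2_diff)
  then show ?thesis by linarith
qed

text \<open>On the \<open>j\<close>-th half period \<open>grid_interval (T/2) j\<close> the circuit follows \<open>A1\<close>, \<open>b1\<close> for even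
  \<open>j\<close> and \<open>A2\<close> for odd \<open>j\<close>; both read \<open>i' = -R/L i - s v/L (+ Vdc/L)\<close>, \<open>v' = s i/C\<close> with
  \<open>s = switch_sign j\<close>.\<close>

definition switch_sign :: "nat \<Rightarrow> real" where
  "switch_sign j = (if even j then 1 else -1)"

lemma abs_switch_sign [simp]: "\<bar>switch_sign j\<bar> = 1"
  by (simp add: switch_sign_def)

locale unforced_switched_rlc =
  fixes R L C h :: real and i v :: "real \<Rightarrow> real"
  assumes R_pos: "R > 0" and L_pos: "L > 0" and C_pos: "C > 0" and h_pos: "h > 0"
    and current_has_derivative: "\<And>j t. t \<in> grid_interval h j \<Longrightarrow>
          (i has_real_derivative (- R / L * i t - switch_sign j * v t / L)) (at t within grid_interval h j)"
    and voltage_has_derivative: "\<And>j t. t \<in> grid_interval h j \<Longrightarrow>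
          (v has_real_derivative (switch_sign j * i t / C)) (at t within grid_interval h j)"
begin

definition energy :: "real \<Rightarrow> real" where
  "energy t = L * (i t)\<^sup>2 / 2 + C * (v t)\<^sup>2 / 2"

lemma energy_nonneg: "energy t \<ge> 0"
  using L_pos C_pos by (simp add: energy_def)

lemma energy_has_derivative:
  assumes "t \<in> grid_interval h j"
  shows "(energy has_real_derivative (- R * (i t)\<^sup>2)) (at t within grid_interval h j)"
proof -
  define di where "di = - R / L * i t - switch_sign j * v t / L"
  define dv where "dv = switch_sign j * i t / C"
  have "(energy has_real_derivative
          L * (of_nat 2 * (di * i t ^ (2 - Suc 0))) / 2 + C * (of_nat 2 * (dv * v t ^ (2 - Suc 0))) / 2)
          (at t within grid_interval h j)"
    unfolding energy_def [abs_def] di_def dv_def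
    by (intro DERIV_add DERIV_cdivide DERIV_cmult DERIV_power
          current_has_derivative[OF assms] voltage_has_derivative[OF assms])
  moreover have "L * (of_nat 2 * (di * i t ^ (2 - Suc 0))) / 2 + C * (of_nat 2 * (dv * v t ^ (2 - Suc 0))) / 2
                 = - R * (i t)\<^sup>2"
    using L_pos C_pos by (simp add: di_def dv_def field_simps power2_eq_square)
  ultimately show ?thesis by simp
qed

lemma energy_antimono: "0 \<le> a \<Longrightarrow> a \<le> b \<Longrightarrow> energy b \<le> energy a"
  by (rule grid_DERIV_nonpos_imp_nonincreasing[OF h_pos, where g' = "\<lambda>j t. - R * (i t)\<^sup>2"])
    (use energy_has_derivative R_pos in auto)

lemma energy_decrease:
  assumes "0 \<le> a" "a \<le> b" and away: "\<And>t. a \<le> t \<Longrightarrow> t \<le> b \<Longrightarrow> c \<le> \<bar>i t\<bar>" and "c \<ge> 0"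
  shows "energy b \<le> energy a - R * c\<^sup>2 * (b - a)"
proof -
  have "(\<lambda>t. energy t + R * c\<^sup>2 * t) b \<le> (\<lambda>t. energy t + R * c\<^sup>2 * t) a"
  proof (rule grid_DERIV_nonpos_imp_nonincreasing[OF h_pos assms(1,2),
          where g' = "\<lambda>j t. - R * (i t)\<^sup>2 + R * c\<^sup>2 * 1"])
    fix j t assume "t \<in> grid_interval h j"
    then show "((\<lambda>t. energy t + R * c\<^sup>2 * t) has_real_derivative - R * (i t)\<^sup>2 + R * c\<^sup>2 * 1)
                 (at t within grid_interval h j)"
      by (intro DERIV_add energy_has_derivative DERIV_cmult DERIV_ident)
  next
    fix j t assume "a \<le> t" "t \<le> b"
    then have "c\<^sup>2 \<le> \<bar>i t\<bar>\<^sup>2"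
      using away \<open>c \<ge> 0\<close> by (intro power_mono) auto
    then show "- R * (i t)\<^sup>2 + R * c\<^sup>2 * 1 \<le> 0"
      using R_pos by simp
  qed
  then show ?thesis by (simp add: algebra_simps)
qed

lemma state_bounded:
  obtains B where "\<And>t. 0 \<le> t \<Longrightarrow> \<bar>i t\<bar> \<le> B \<and> \<bar>v t\<bar> \<le> B"
proof
  fix t :: real assume "0 \<le> t"
  then have E: "L * (i t)\<^sup>2 / 2 + C * (v t)\<^sup>2 / 2 \<le> energy 0"
    using energy_antimono[of 0 t] by (simp add: energy_def)
  moreover have "0 \<le> L * (i t)\<^sup>2" "0 \<le> C * (v t)\<^sup>2"
    using L_pos C_pos by auto
  ultimately have "L * (i t)\<^sup>2 \<le> 2 * energy 0" "C * (v t)\<^sup>2 \<le> 2 * energy 0"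
    by linarith+
  then have "(i t)\<^sup>2 \<le> 2 * energy 0 / L" "(v t)\<^sup>2 \<le> 2 * energy 0 / C"
    using L_pos C_pos by (simp_all add: pos_le_divide_eq mult.commute)
  moreover have "0 \<le> 2 * energy 0 / L" "0 \<le> 2 * energy 0 / C"
    using energy_nonneg[of 0] L_pos C_pos by auto
  ultimately show "\<bar>i t\<bar> \<le> 1 + 2 * energy 0 / L + 2 * energy 0 / C
                 \<and> \<bar>v t\<bar> \<le> 1 + 2 * energy 0 / L + 2 * energy 0 / C"
    using abs_le_one_plus_square[of "i t"] abs_le_one_plus_square[of "v t"] by linarith
qed

lemma current_lipschitz:
  obtains K where "K > 0" "\<And>a b. 0 \<le> a \<Longrightarrow> a \<le> b \<Longrightarrow> \<bar>i b - i a\<bar> \<le> K * (b - a)"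
proof -
  obtain B where B: "\<And>t. 0 \<le> t \<Longrightarrow> \<bar>i t\<bar> \<le> B \<and> \<bar>v t\<bar> \<le> B"
    using state_bounded by blast
  have B0: "B \<ge> 0" using B[of 0] by auto
  define K where "K = (R + 1) * B / L + 1"
  have slope: "\<bar>- R / L * i t - switch_sign j * v t / L\<bar> \<le> K" if "0 \<le> t" for j t
  proof -
    have "\<bar>R * i t + switch_sign j * v t\<bar> \<le> R * B + B"
      using B[OF that] R_pos
      by (auto simp: abs_mult intro!: order.trans[OF abs_triangle_ineq] add_mono mult_left_mono)
    then have "\<bar>R * i t + switch_sign j * v t\<bar> / L \<le> (R + 1) * B / L"
      using L_pos by (simp add: divide_right_mono algebra_simps)
    moreover have "\<bar>- R / L * i t - switch_sign j * v t / L\<bar> = \<bar>R * i t + switch_sign j * v t\<bar> / L"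
    proof -
      have "- R / L * i t - switch_sign j * v t / L = - ((R * i t + switch_sign j * v t) / L)"
        by (simp add: add_divide_distrib)
      then show ?thesis using L_pos by (simp add: abs_divide)
    qed
    ultimately show ?thesis by (simp add: K_def)
  qed
  show ?thesis
  proof
    have "0 \<le> (R + 1) * B / L" using B0 R_pos L_pos by simp
    then show "K > 0" by (simp add: K_def)
    show "\<bar>i b - i a\<bar> \<le> K * (b - a)" if "0 \<le> a" "a \<le> b" for a b
      by (rule grid_DERIV_bound_imp_lipschitz[OF h_pos that current_has_derivative]) (use slope that in auto)
  qed
qed

lemma energy_drop_after_large_current:
  assumes K: "K > 0" "\<And>a b. 0 \<le> a \<Longrightarrow> a \<le> b \<Longrightarrow> \<bar>i b - i a\<bar> \<le> K * (b - a)"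
    and "c > 0" "0 \<le> t0" and big: "2 * c < \<bar>i t0\<bar>"
  shows "energy (t0 + c / K) \<le> energy t0 - R * c\<^sup>2 * (c / K)"
proof -
  have "c \<le> \<bar>i t\<bar>" if t: "t0 \<le> t" "t \<le> t0 + c / K" for t
  proof -
    have "\<bar>i t - i t0\<bar> \<le> K * (t - t0)"
      using K(2)[of t0 t] t \<open>0 \<le> t0\<close> by auto
    also have "\<dots> \<le> K * (c / K)"
      using t K(1) by (intro mult_left_mono) auto
    finally show ?thesis
      using big K(1) by simp
  qed
  then have "energy (t0 + c / K) \<le> energy t0 - R * c\<^sup>2 * (t0 + c / K - t0)"
    using assms by (intro energy_decrease) auto
  then show ?thesis by simp
qed

lemma current_tendsto_zero: "(i \<longlongrightarrow> 0) at_top"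
proof -
  obtain K where K: "K > 0" "\<And>a b. 0 \<le> a \<Longrightarrow> a \<le> b \<Longrightarrow> \<bar>i b - i a\<bar> \<le> K * (b - a)"
    using current_lipschitz by blast
  define E where "E = Inf (energy ` {0..})"
  have bdd: "bdd_below (energy ` {0..})"
    by (auto intro!: bdd_belowI[of _ 0] energy_nonneg)
  have small: "\<forall>\<^sub>F t in at_top. \<bar>i t\<bar> \<le> 2 * c" if c: "c > 0" for c
  proof -
    have "E < E + R * c\<^sup>2 * (c / K)"
      using R_pos c K(1) by simp
    then obtain t1 where t1: "t1 \<ge> 0" "energy t1 < E + R * c\<^sup>2 * (c / K)"
      unfolding E_def using bdd by (subst (asm) cInf_less_iff) auto
    have "\<bar>i t0\<bar> \<le> 2 * c" if t0: "t0 \<ge> t1" for t0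
    proof (rule ccontr)
      assume "\<not> \<bar>i t0\<bar> \<le> 2 * c"
      then have "energy (t0 + c / K) \<le> energy t0 - R * c\<^sup>2 * (c / K)"
        using energy_drop_after_large_current[OF K c] t0 t1 by auto
      moreover have "energy t0 \<le> energy t1"
        using energy_antimono t0 t1 by auto
      moreover have "E \<le> energy (t0 + c / K)"
        unfolding E_def using bdd t0 t1 c K(1) by (intro cInf_lower) auto
      ultimately show False using t1 by linarith
    qed
    then show ?thesis
      by (auto simp: eventually_at_top_linorder)
  qed
  show ?thesis
    unfolding tendsto_iff dist_real_def
  proof (intro allI impI)
    fix e :: real assume "e > 0"
    then show "\<forall>\<^sub>F t in at_top. \<bar>i t - 0\<bar> < e"
      using small[of "e / 4"] by (auto elim: eventually_mono)
  qed
qed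

lemma voltage_lipschitz_after:
  assumes "\<And>t. t0 \<le> t \<Longrightarrow> \<bar>i t\<bar> \<le> e" "0 \<le> t0" "t0 \<le> a" "a \<le> b"
  shows "\<bar>v b - v a\<bar> \<le> e / C * (b - a)"
proof (rule grid_DERIV_bound_imp_lipschitz[of h a b v "\<lambda>j t. switch_sign j * i t / C"])
  show "\<bar>switch_sign j * i t / C\<bar> \<le> e / C" if "a \<le> t" for j t
    using assms that C_pos by (simp add: abs_mult abs_divide divide_right_mono)
qed (use assms h_pos voltage_has_derivative in \<open>simp_all\<close>)

lemma current_change_on_grid_interval:
  assumes "\<bar>\<sigma>\<bar> = 1" "R * e \<le> c"
    and current_small: "\<And>t. t \<in> grid_interval h j \<Longrightarrow> \<bar>i t\<bar> \<le> e"
    and voltage_large: "\<And>t. t \<in> grid_interval h j \<Longrightarrow> 2 * c \<le> \<sigma> * v t"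
  shows "c * h / L \<le> switch_sign j * \<sigma> * (i (real j * h) - i (real (Suc j) * h))"
proof -
  define p q D where "p = real j * h" and "q = real (Suc j) * h" and "D = switch_sign j * \<sigma>"
  have pq: "grid_interval h j = {p..q}" "q = p + h"
    by (simp_all add: grid_interval_def p_def q_def algebra_simps)
  have "(\<lambda>t. D * i t + c / L * t) q \<le> (\<lambda>t. D * i t + c / L * t) p"
  proof (rule DERIV_nonpos_imp_nonincreasing_within[where g = "\<lambda>t. D * i t + c / L * t" and
        g' = "\<lambda>t. D * (- R / L * i t - switch_sign j * v t / L) + c / L * 1"])
    show "p \<le> q" using pq h_pos by simp
  next
    fix t assume "t \<in> {p..q}"
    then show "((\<lambda>t. D * i t + c / L * t) has_real_derivative
                D * (- R / L * i t - switch_sign j * v t / L) + c / L * 1) (at t within {p..q})"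
      using current_has_derivative[of t j] pq by (intro DERIV_add DERIV_cmult DERIV_ident) auto
  next
    fix t assume t: "t \<in> {p..q}"
    have "\<bar>D * i t\<bar> \<le> e"
      using current_small[of t] t pq assms(1) by (simp add: D_def abs_mult)
    then have "R * (- e) \<le> R * (D * i t)"
      using R_pos by (intro mult_left_mono) auto
    then have "- c \<le> R * (D * i t)"
      using assms(2) by simp
    moreover have "2 * c \<le> \<sigma> * v t"
      using voltage_large t pq by auto
    ultimately have "c - (R * (D * i t) + \<sigma> * v t) \<le> 0"
      by linarith
    moreover have "D * (- R / L * i t - switch_sign j * v t / L) + c / L * 1
                   = (c - (R * (D * i t) + \<sigma> * v t)) / L"
      using L_pos by (simp add: D_def field_simps switch_sign_def)
    ultimately show "D * (- R / L * i t - switch_sign j * v t / L) + c / L * 1 \<le> 0"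
      using L_pos by (simp add: divide_nonpos_pos)
  qed
  then show ?thesis
    using pq by (simp add: D_def p_def q_def algebra_simps)
qed

text \<open>If the voltage were large at \<open>t\<^sub>0\<close>, it would keep its sign on a whole switching
  interval inside \<open>[t\<^sub>0, t\<^sub>0 + 2h]\<close>, where it changes the small current by at least \<open>c h / L\<close>.\<close>

lemma voltage_small_after_current_small:
  assumes t0: "0 \<le> t0" and current_small: "\<And>t. t0 \<le> t \<Longrightarrow> \<bar>i t\<bar> \<le> e"
    and e: "e / C * (2 * h) \<le> c" "R * e \<le> c" "2 * e < c * h / L"
  shows "\<bar>v t0\<bar> \<le> 3 * c"
proof (rule ccontr)
  assume big: "\<not> \<bar>v t0\<bar> \<le> 3 * c"
  define \<sigma> where "\<sigma> = (if v t0 > 0 then 1 else -1 :: real)"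
  have \<sigma>: "\<bar>\<sigma>\<bar> = 1" "\<sigma> * v t0 = \<bar>v t0\<bar>"
    by (simp_all add: \<sigma>_def)
  obtain j where j: "t0 \<le> real j * h" "real (Suc j) * h \<le> t0 + 2 * h"
    using grid_interval_within[OF h_pos t0] by auto
  have "2 * c \<le> \<sigma> * v t" if "t \<in> grid_interval h j" for t
  proof -
    have t: "t0 \<le> t" "t \<le> t0 + 2 * h"
      using that j by (auto simp: grid_interval_def)
    have "\<bar>v t - v t0\<bar> \<le> e / C * (t - t0)"
      by (rule voltage_lipschitz_after[OF current_small t0 order.refl t(1)])
    also have "\<dots> \<le> e / C * (2 * h)"
      using t current_small[of t0] C_pos by (intro mult_left_mono) auto
    finally have "\<bar>\<sigma> * v t - \<sigma> * v t0\<bar> \<le> c"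
      using e \<sigma>(1) by (simp add: abs_mult right_diff_distrib[symmetric])
    then show ?thesis using \<sigma>(2) big by linarith
  qed
  moreover have "\<bar>i t\<bar> \<le> e" if "t \<in> grid_interval h j" for t
    using that j h_pos by (auto simp: grid_interval_def intro!: current_small)
  ultimately have "c * h / L \<le> switch_sign j * \<sigma> * (i (real j * h) - i (real (Suc j) * h))"
    using current_change_on_grid_interval[OF \<sigma>(1) e(2)] by blast
  moreover have "\<bar>switch_sign j * \<sigma> * (i (real j * h) - i (real (Suc j) * h))\<bar> \<le> 2 * e"
  proof -
    have "\<bar>i (real j * h)\<bar> \<le> e" "\<bar>i (real (Suc j) * h)\<bar> \<le> e"
      using j h_pos by (auto intro!: current_small simp: algebra_simps)
    then show ?thesis using \<sigma>(1) by (simp add: abs_mult)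
  qed
  ultimately show False using e(3) by linarith
qed

lemma voltage_tendsto_zero: "(v \<longlongrightarrow> 0) at_top"
proof -
  have small: "\<forall>\<^sub>F t in at_top. \<bar>v t\<bar> \<le> 3 * c" if c: "c > 0" for c
  proof -
    define e where "e = min (c * C / (2 * h)) (min (c / R) (c * h / (4 * L)))"
    have e_le: "e \<le> c * C / (2 * h)" "e \<le> c / R" "e \<le> c * h / (4 * L)"
      by (simp_all add: e_def)
    have e: "e > 0" "e / C * (2 * h) \<le> c" "R * e \<le> c" "2 * e < c * h / L"
    proof -
      show "e > 0" using c R_pos L_pos C_pos h_pos by (simp add: e_def)
      show "e / C * (2 * h) \<le> c"
        using e_le(1) C_pos h_pos by (simp add: field_simps)
      show "R * e \<le> c"
        using e_le(2) R_pos by (simp add: field_simps)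
      have "c * h / (4 * L) * 2 < c * h / L"
        using c h_pos L_pos by (simp add: field_simps)
      then show "2 * e < c * h / L" using e_le(3) by linarith
    qed
    have "\<forall>\<^sub>F t in at_top. \<bar>i t\<bar> < e"
      using tendsto_iff[THEN iffD1, OF current_tendsto_zero, rule_format, OF e(1)]
      by (simp add: dist_real_def)
    then obtain t1 where "\<forall>t\<ge>t1. \<bar>i t\<bar> < e"
      by (auto simp: eventually_at_top_linorder)
    then have "\<bar>v t0\<bar> \<le> 3 * c" if "t0 \<ge> max t1 0" for t0
      using that by (intro voltage_small_after_current_small[OF _ _ e(2-4)]) (auto intro: less_imp_le)
    then show ?thesis
      unfolding eventually_at_top_linorder by blast
  qed
  show ?thesis
    unfolding tendsto_iff dist_real_def
  proof (intro allI impI)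
    fix e :: real assume "e > 0"
    then show "\<forall>\<^sub>F t in at_top. \<bar>v t - 0\<bar> < e"
      using small[of "e / 6"] by (auto elim: eventually_mono)
  qed
qed

end

section \<open>Solutions of the switched system\<close>

lemma vec_nth_has_real_derivative:
  assumes "(x has_vector_derivative D) F"
  shows "((\<lambda>t. x t $ k) has_real_derivative D $ k) F"
proof -
  have "((\<lambda>t. x t $ k) has_derivative (\<lambda>h. (h *\<^sub>R D) $ k)) F"
    using bounded_linear.has_derivative[OF bounded_linear_vec_nth assms[unfolded has_vector_derivative_def]] .
  moreover have "(\<lambda>h. (h *\<^sub>R D) $ k) = (*) (D $ k)"
    by (auto simp: fun_eq_iff)
  ultimately show ?thesis
    by (simp add: has_field_derivative_def)
qed

lemma A1_mult_vec_nth: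
  "(A1 R L C *v z) $ 1 = - R / L * z $ 1 - z $ 2 / L" "(A1 R L C *v z) $ 2 = z $ 1 / C"
  by (simp_all add: A1_def matrix_vector_mult_def sum_2)

lemma A2_mult_vec_nth:
  "(A2 R L C *v z) $ 1 = - R / L * z $ 1 + z $ 2 / L" "(A2 R L C *v z) $ 2 = - z $ 1 / C"
  by (simp_all add: A2_def matrix_vector_mult_def sum_2)

lemma b1_nth: "b1 L Vdc $ 1 = Vdc / L" "b1 L Vdc $ 2 = 0"
  by (simp_all add: b1_def)

lemma grid_interval_half_period:
  "grid_interval (T / 2) (2 * k) = {real k * T .. real k * T + T / 2}"
  "grid_interval (T / 2) (2 * k + 1) = {real k * T + T / 2 .. real (Suc k) * T}"
  by (simp_all add: grid_interval_def algebra_simps)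

lemma switched_solution_has_vector_derivative:
  assumes sol: "is_switched_solution R L C Vdc T x" and t: "t \<in> grid_interval (T / 2) j"
  shows "(x has_vector_derivative
           (if even j then A1 R L C *v x t + b1 L Vdc else A2 R L C *v x t))
           (at t within grid_interval (T / 2) j)"
proof (cases "even j")
  case True
  then obtain k where j: "j = 2 * k" by (rule evenE)
  have "t \<in> {real k * T .. real k * T + T / 2}"
    using t unfolding j grid_interval_half_period(1) .
  from sol[unfolded is_switched_solution_def, THEN conjunct2, THEN conjunct1, rule_format, OF this]
  show ?thesis
    using True unfolding j grid_interval_half_period(1) by simp
next
  case False
  then obtain k where j: "j = 2 * k + 1" by (rule oddE)
  have "t \<in> {real k * T + T / 2 .. real (Suc k) * T}"
    using t unfolding j grid_interval_half_period(2) .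
  from sol[unfolded is_switched_solution_def, THEN conjunct2, THEN conjunct2, rule_format, OF this]
  show ?thesis
    using False unfolding j grid_interval_half_period(2) by simp
qed

lemma switched_solution_has_derivative:
  assumes "is_switched_solution R L C Vdc T x" "t \<in> grid_interval (T / 2) j"
  shows switched_current_has_derivative:
      "((\<lambda>t. x t $ 1) has_real_derivative
          - R / L * x t $ 1 - switch_sign j * x t $ 2 / L + (if even j then Vdc / L else 0))
          (at t within grid_interval (T / 2) j)"
    and switched_voltage_has_derivative:
      "((\<lambda>t. x t $ 2) has_real_derivative switch_sign j * x t $ 1 / C)
          (at t within grid_interval (T / 2) j)"
  using vec_nth_has_real_derivative[OF switched_solution_has_vector_derivative[OF assms], of 1]
    vec_nth_has_real_derivative[OF switched_solution_has_vector_derivative[OF assms], of 2]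
  by (auto simp: switch_sign_def A1_mult_vec_nth A2_mult_vec_nth b1_nth split: if_splits)

lemma unforced_switched_rlc_difference:
  assumes "R > 0" "L > 0" "C > 0" "T > 0"
    and sol: "is_switched_solution R L C Vdc T x" "is_switched_solution R L C Vdc T y"
  shows "unforced_switched_rlc R L C (T / 2) (\<lambda>t. x t $ 1 - y t $ 1) (\<lambda>t. x t $ 2 - y t $ 2)"
proof
  fix j t assume t: "t \<in> grid_interval (T / 2) j"
  show "((\<lambda>t. x t $ 1 - y t $ 1) has_real_derivative
          - R / L * (x t $ 1 - y t $ 1) - switch_sign j * (x t $ 2 - y t $ 2) / L)
          (at t within grid_interval (T / 2) j)"
    by (rule DERIV_cong[OF DERIV_diff[OF switched_current_has_derivative[OF sol(1) t]
                                         switched_current_has_derivative[OF sol(2) t]]])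
      (use assms in \<open>simp add: field_simps\<close>)
  show "((\<lambda>t. x t $ 2 - y t $ 2) has_real_derivative switch_sign j * (x t $ 1 - y t $ 1) / C)
          (at t within grid_interval (T / 2) j)"
    by (rule DERIV_cong[OF DERIV_diff[OF switched_voltage_has_derivative[OF sol(1) t]
                                         switched_voltage_has_derivative[OF sol(2) t]]])
      (use assms in \<open>simp add: field_simps\<close>)
qed (use assms in auto)

lemma grid_interval_shift_has_derivative:
  assumes deriv: "\<And>s. s \<in> grid_interval h (Suc j) \<Longrightarrow>
                    (f has_real_derivative f' s) (at s within grid_interval h (Suc j))"
    and t: "t \<in> grid_interval h j"
  shows "((\<lambda>t. f (t + h)) has_real_derivative f' (t + h)) (at t within grid_interval h j)"
proof -
  have shift: "(\<lambda>t. t + h) ` grid_interval h j = grid_interval h (Suc j)"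
    by (simp add: grid_interval_def algebra_simps)
  have "(f \<circ> (\<lambda>t. t + h) has_real_derivative f' (t + h) * 1) (at t within grid_interval h j)"
  proof (rule DERIV_image_chain)
    show "(f has_real_derivative f' (t + h)) (at (t + h) within (\<lambda>t. t + h) ` grid_interval h j)"
      unfolding shift using t by (intro deriv) (auto simp: grid_interval_def algebra_simps)
  qed (auto intro!: derivative_eq_intros)
  then show ?thesis by (simp add: o_def)
qed

text \<open>A solution and its translate by half a period solve the circuit with opposite switch
  positions, so their current difference and voltage sum, offset by the source, solve the
  unforced circuit.\<close>

lemma unforced_switched_rlc_half_period_shift:
  assumes "R > 0" "L > 0" "C > 0" "T > 0" and sol: "is_switched_solution R L C Vdc T x"
  shows "unforced_switched_rlc R L C (T / 2)
           (\<lambda>t. x t $ 1 - x (t + T / 2) $ 1) (\<lambda>t. x t $ 2 + x (t + T / 2) $ 2 - Vdc)"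
proof
  fix j t assume t: "t \<in> grid_interval (T / 2) j"
  note shifted =
    grid_interval_shift_has_derivative[OF switched_current_has_derivative[OF sol] t]
    grid_interval_shift_has_derivative[OF switched_voltage_has_derivative[OF sol] t]
  show "((\<lambda>t. x t $ 1 - x (t + T / 2) $ 1) has_real_derivative
          - R / L * (x t $ 1 - x (t + T / 2) $ 1) - switch_sign j * (x t $ 2 + x (t + T / 2) $ 2 - Vdc) / L)
          (at t within grid_interval (T / 2) j)"
    by (rule DERIV_cong[OF DERIV_diff[OF switched_current_has_derivative[OF sol t] shifted(1)]])
      (use assms in \<open>auto simp: field_simps switch_sign_def\<close>)
  show "((\<lambda>t. x t $ 2 + x (t + T / 2) $ 2 - Vdc) has_real_derivative
          switch_sign j * (x t $ 1 - x (t + T / 2) $ 1) / C) (at t within grid_interval (T / 2) j)"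
    by (rule DERIV_cong[OF DERIV_diff[OF DERIV_add[OF switched_voltage_has_derivative[OF sol t] shifted(2)]
                                         DERIV_const]])
      (use assms in \<open>auto simp: field_simps switch_sign_def\<close>)
qed (use assms in auto)

lemma switched_solution_continuous_component:
  "is_switched_solution R L C Vdc T x \<Longrightarrow> continuous_on {0..} (\<lambda>t. x t $ k)"
  unfolding is_switched_solution_def by (auto intro: continuous_on_component)

lemma switched_solutions_converge:
  assumes "R > 0" "L > 0" "C > 0" "T > 0"
    and "is_switched_solution R L C Vdc T x" "is_switched_solution R L C Vdc T y"
  shows "((\<lambda>t. x t $ k - y t $ k) \<longlongrightarrow> 0) at_top"
proof -
  interpret difference: unforced_switched_rlc R L C "T / 2" "\<lambda>t. x t $ 1 - y t $ 1" "\<lambda>t. x t $ 2 - y t $ 2"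
    using assms by (rule unforced_switched_rlc_difference)
  show ?thesis
    using exhaust_2[of k] difference.current_tendsto_zero difference.voltage_tendsto_zero by auto
qed

lemma switched_solution_has_average_of_attractor:
  assumes "R > 0" "L > 0" "C > 0" "T > 0"
    and sol: "is_switched_solution R L C Vdc T x" and psol: "is_switched_solution R L C Vdc T xp"
    and avg: "has_average (\<lambda>t. xp t $ k) a"
  shows "has_average (\<lambda>t. x t $ k) a"
proof -
  have "has_average (\<lambda>t. xp t $ k + (x t $ k - xp t $ k)) (a + 0)"
    using sol psol
    by (intro has_average_add avg has_average_tendsto_zero switched_solutions_converge[OF assms(1-6)]
          continuous_on_diff switched_solution_continuous_component)
  then show ?thesis by simp
qed

section \<open>The periodic solution\<close>

lemma periodic_switched_solution_half_period_symmetry: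
  assumes "R > 0" "L > 0" "C > 0" "T > 0"
    and psol: "is_switched_solution R L C Vdc T xp" and per: "\<forall>t\<ge>0. xp (t + T) = xp t"
    and "t \<ge> 0"
  shows "xp (t + T / 2) $ 1 = xp t $ 1" and "xp (t + T / 2) $ 2 = Vdc - xp t $ 2"
proof -
  interpret shifted: unforced_switched_rlc R L C "T / 2"
      "\<lambda>t. xp t $ 1 - xp (t + T / 2) $ 1" "\<lambda>t. xp t $ 2 + xp (t + T / 2) $ 2 - Vdc"
    using assms(1-5) by (rule unforced_switched_rlc_half_period_shift)
  have per_shifted: "\<forall>t\<ge>0. xp (t + T + T / 2) = xp (t + T / 2)"
    using per assms(4) by (metis add.commute add.left_commute add_nonneg_nonneg half_gt_zero less_eq_real_def)
  have "xp t $ 1 - xp (t + T / 2) $ 1 = 0"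
    by (rule periodic_tendsto_zero_imp_zero[OF _ assms(4) shifted.current_tendsto_zero \<open>t \<ge> 0\<close>])
      (use per per_shifted in simp)
  then show "xp (t + T / 2) $ 1 = xp t $ 1" by simp
  have "xp t $ 2 + xp (t + T / 2) $ 2 - Vdc = 0"
    by (rule periodic_tendsto_zero_imp_zero[OF _ assms(4) shifted.voltage_tendsto_zero \<open>t \<ge> 0\<close>])
      (use per per_shifted in simp)
  then show "xp (t + T / 2) $ 2 = Vdc - xp t $ 2" by simp
qed

lemma switched_solution_first_half_has_integral:
  assumes sol: "is_switched_solution R L C Vdc T x" and "T > 0"
  shows "((\<lambda>t. x t $ 1 / C) has_integral (x (T / 2) $ 2 - x 0 $ 2)) {0..T / 2}"
    and "((\<lambda>t. - R / L * x t $ 1 - x t $ 2 / L + Vdc / L) has_integral (x (T / 2) $ 1 - x 0 $ 1)) {0..T / 2}"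
proof -
  have first_half: "grid_interval (T / 2) 0 = {0..T / 2}"
    by (simp add: grid_interval_def)
  show "((\<lambda>t. x t $ 1 / C) has_integral (x (T / 2) $ 2 - x 0 $ 2)) {0..T / 2}"
    using switched_voltage_has_derivative[OF sol, of _ 0] \<open>T > 0\<close>
    by (intro fundamental_theorem_of_calculus)
      (auto simp: first_half switch_sign_def has_real_derivative_iff_has_vector_derivative)
  show "((\<lambda>t. - R / L * x t $ 1 - x t $ 2 / L + Vdc / L) has_integral (x (T / 2) $ 1 - x 0 $ 1)) {0..T / 2}"
    using switched_current_has_derivative[OF sol, of _ 0] \<open>T > 0\<close>
    by (intro fundamental_theorem_of_calculus)
      (auto simp: first_half switch_sign_def has_real_derivative_iff_has_vector_derivative)
qed

lemma integral_split_half_period: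
  fixes g :: "real \<Rightarrow> real"
  assumes "continuous_on {0..} g" "T \<ge> 0"
  shows "integral {0..T} g = integral {0..T / 2} g + integral {0..T / 2} (\<lambda>t. g (t + T / 2))"
proof -
  have "integral {0..T} g = integral {0..T / 2} g + integral {T / 2..T} g"
    using Henstock_Kurzweil_Integration.integral_combine[where a = 0 and c = "T / 2" and b = T and f = g]
      integrable_on_Icc_of_continuous_on_nonneg[OF assms(1)] assms(2) by auto
  moreover have "integral {0..T / 2} (g \<circ> (+) (T / 2)) = integral {0 + T / 2 .. T / 2 + T / 2} g"
    by (rule integral_shift_Icc_real)
  ultimately show ?thesis
    by (simp add: o_def add.commute)
qed

context
  fixes R L C Vdc T :: real and xp :: "real \<Rightarrow> real^2"
  assumes pos: "R > 0" "L > 0" "C > 0" "T > 0"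
    and psol: "is_switched_solution R L C Vdc T xp"
    and per: "\<forall>t\<ge>0. xp (t + T) = xp t"
begin

lemma periodic_switched_current_first_half_integral:
  "integral {0..T / 2} (\<lambda>t. xp t $ 1) = C * (Vdc - 2 * xp 0 $ 2)"
proof -
  have "((\<lambda>t. C * (xp t $ 1 / C)) has_integral C * (xp (T / 2) $ 2 - xp 0 $ 2)) {0..T / 2}"
    by (rule has_integral_mult_right[OF switched_solution_first_half_has_integral(1)[OF psol pos(4)]])
  then show ?thesis
    using periodic_switched_solution_half_period_symmetry(2)[OF pos psol per, of 0] pos(3)
    by (simp add: integral_unique)
qed

lemma periodic_switched_first_half_integrals_balance:
  "R * integral {0..T / 2} (\<lambda>t. xp t $ 1) + integral {0..T / 2} (\<lambda>t. xp t $ 2) = Vdc * T / 2"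
proof -
  have cont: "continuous_on {0..T / 2} (\<lambda>t. xp t $ k)" for k
    using switched_solution_continuous_component[OF psol] by (rule continuous_on_subset) auto
  have "((\<lambda>t. - R / L * xp t $ 1 - xp t $ 2 / L + Vdc / L) has_integral 0) {0..T / 2}"
    using switched_solution_first_half_has_integral(2)[OF psol pos(4)]
      periodic_switched_solution_half_period_symmetry(1)[OF pos psol per, of 0] by simp
  moreover have "((\<lambda>t. - R / L * xp t $ 1 - xp t $ 2 / L + Vdc / L) has_integral
      - R / L * integral {0..T / 2} (\<lambda>t. xp t $ 1) - integral {0..T / 2} (\<lambda>t. xp t $ 2) / L
      + T / 2 * (Vdc / L)) {0..T / 2}"
    using has_integral_const_real[of "Vdc / L" 0 "T / 2"] pos(4)
    by (intro has_integral_add has_integral_diff has_integral_mult_right has_integral_divide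
          integrable_integral integrable_continuous_real cont) auto
  ultimately have "- R / L * integral {0..T / 2} (\<lambda>t. xp t $ 1) - integral {0..T / 2} (\<lambda>t. xp t $ 2) / L
      + T / 2 * (Vdc / L) = 0"
    by (rule has_integral_unique[symmetric])
  then show ?thesis
    using pos(2) by (simp add: field_simps)
qed

lemma has_average_periodic_switched_voltage: "has_average (\<lambda>t. xp t $ 2) (Vdc / 2)"
proof -
  have cont: "continuous_on {0..} (\<lambda>t. xp t $ 2)"
    by (rule switched_solution_continuous_component[OF psol])
  have "integral {0..T / 2} (\<lambda>t. xp (t + T / 2) $ 2) = integral {0..T / 2} (\<lambda>t. Vdc - xp t $ 2)"
    by (rule integral_cong) (simp add: periodic_switched_solution_half_period_symmetry(2)[OF pos psol per])
  also have "\<dots> = integral {0..T / 2} (\<lambda>t. Vdc) - integral {0..T / 2} (\<lambda>t. xp t $ 2)"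
    by (rule integral_diff[OF integrable_const_ivl integrable_on_Icc_of_continuous_on_nonneg[OF cont]]) simp
  also have "integral {0..T / 2} (\<lambda>t. Vdc) = T / 2 * Vdc"
    using pos(4) by simp
  finally have "integral {0..T} (\<lambda>t. xp t $ 2) = T / 2 * Vdc"
    using integral_split_half_period[OF cont, of T] pos(4) by linarith
  then have average: "integral {0..T} (\<lambda>t. xp t $ 2) / T = Vdc / 2"
    using pos(4) by (simp add: field_simps)
  have "\<forall>t\<ge>0. xp (t + T) $ k = xp t $ k" for k
    using per by simp
  then show ?thesis
    using has_average_periodic[OF pos(4) cont] unfolding average by blast
qed

lemma has_average_periodic_switched_current:
  "has_average (\<lambda>t. xp t $ 1) (2 * C / T * (Vdc - 2 * xp 0 $ 2))"
proof -
  have cont: "continuous_on {0..} (\<lambda>t. xp t $ 1)"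
    by (rule switched_solution_continuous_component[OF psol])
  have "integral {0..T / 2} (\<lambda>t. xp (t + T / 2) $ 1) = integral {0..T / 2} (\<lambda>t. xp t $ 1)"
    by (rule integral_cong) (simp add: periodic_switched_solution_half_period_symmetry(1)[OF pos psol per])
  then have "integral {0..T} (\<lambda>t. xp t $ 1) = 2 * (C * (Vdc - 2 * xp 0 $ 2))"
    using integral_split_half_period[OF cont, of T] pos(4) periodic_switched_current_first_half_integral
    by linarith
  then have average: "integral {0..T} (\<lambda>t. xp t $ 1) / T = 2 * C / T * (Vdc - 2 * xp 0 $ 2)"
    by simp
  have "\<forall>t\<ge>0. xp (t + T) $ k = xp t $ k" for k
    using per by simp
  then show ?thesis
    using has_average_periodic[OF pos(4) cont] unfolding average by blast
qed

lemma periodic_switched_voltage_deviation: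
  assumes bound: "\<And>t. t \<in> {0..T / 2} \<Longrightarrow> \<bar>xp t $ 1\<bar> \<le> M" and t: "t \<in> {0..T / 2}"
  shows "\<bar>Vdc / 2 - xp t $ 2\<bar> \<le> M * T / (4 * C)"
proof -
  have lipschitz: "\<bar>xp b $ 2 - xp a $ 2\<bar> \<le> M / C * (b - a)" if "0 \<le> a" "a \<le> b" "b \<le> T / 2" for a b
  proof (rule grid_DERIV_bound_imp_lipschitz[of "T / 2" a b "\<lambda>t. xp t $ 2"
              "\<lambda>j t. switch_sign j * xp t $ 1 / C"])
    show "\<bar>switch_sign j * xp u $ 1 / C\<bar> \<le> M / C" if "a \<le> u" "u \<le> b" for j u
      using bound[of u] that \<open>0 \<le> a\<close> \<open>b \<le> T / 2\<close> pos(3)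
      by (simp add: abs_mult abs_divide divide_right_mono)
  qed (use that pos(4) switched_voltage_has_derivative[OF psol] in simp_all)
  have midpoint: "\<bar>(p - q + (r - q)) / 2\<bar> \<le> (c + d) / 2"
    if "\<bar>q - p\<bar> \<le> c" "\<bar>r - q\<bar> \<le> d" for p q r c d :: real
    using that by (simp add: abs_le_iff)
  have "Vdc / 2 - xp t $ 2 = ((xp 0 $ 2 - xp t $ 2) + (xp (T / 2) $ 2 - xp t $ 2)) / 2"
    using periodic_switched_solution_half_period_symmetry(2)[OF pos psol per, of 0] by simp
  also have "\<bar>\<dots>\<bar> \<le> (M / C * (t - 0) + M / C * (T / 2 - t)) / 2"
    by (rule midpoint; rule lipschitz) (use t in auto)
  also have "(M / C * (t - 0) + M / C * (T / 2 - t)) / 2 = M * T / (4 * C)"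
    using pos(3) by (simp add: field_simps)
  finally show ?thesis .
qed

lemma periodic_switched_current_average_offset:
  "2 * C / T * (Vdc - 2 * xp 0 $ 2) - Vdc / (2 * R)
     = 2 / (R * T) * integral {0..T / 2} (\<lambda>t. Vdc / 2 - xp t $ 2)"
proof -
  define V where "V = integral {0..T / 2} (\<lambda>t. xp t $ 2)"
  define W where "W = integral {0..T / 2} (\<lambda>t. Vdc / 2 - xp t $ 2)"
  have W_eq: "W = T / 2 * (Vdc / 2) - V"
    unfolding V_def W_def using pos(4) continuous_on_subset[OF switched_solution_continuous_component[OF psol]]
    by (subst integral_diff) (auto intro!: integrable_continuous_real)
  have "C * (Vdc - 2 * xp 0 $ 2) = (Vdc * T / 2 - V) / R"
    using periodic_switched_first_half_integrals_balance pos(1)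
    unfolding periodic_switched_current_first_half_integral V_def[symmetric]
    by (simp add: field_simps)
  then have "2 / T * (C * (Vdc - 2 * xp 0 $ 2)) = 2 / T * ((Vdc * T / 2 - V) / R)"
    by simp
  then have average: "2 * C / T * (Vdc - 2 * xp 0 $ 2) = 2 * (Vdc * T / 2 - V) / (R * T)"
    by (simp add: ac_simps)
  show ?thesis
    unfolding W_def[symmetric] average W_eq using pos by (simp add: field_simps)
qed

lemma periodic_switched_current_average_deviation:
  "\<bar>2 * C / T * (Vdc - 2 * xp 0 $ 2) - Vdc / (2 * R)\<bar>
     \<le> T / (2 * R * C) * (SUP t\<in>{0..T / 2}. \<bar>xp t $ 1\<bar>)"
proof -
  define M where "M = (SUP t\<in>{0..T / 2}. \<bar>xp t $ 1\<bar>)"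
  have cont: "continuous_on {0..T / 2} (\<lambda>t. xp t $ k)" for k
    using switched_solution_continuous_component[OF psol] by (rule continuous_on_subset) auto
  have bdd: "bdd_above ((\<lambda>t. \<bar>xp t $ 1\<bar>) ` {0..T / 2})"
    by (intro bounded_imp_bdd_above compact_imp_bounded compact_continuous_image
          continuous_on_rabs cont compact_Icc)
  have bound: "\<bar>xp t $ 1\<bar> \<le> M" if "t \<in> {0..T / 2}" for t
    unfolding M_def by (rule cSUP_upper[OF that bdd])
  have M_nonneg: "M \<ge> 0"
    using bound[of 0] pos(4) by force
  have deviation: "\<bar>Vdc / 2 - xp t $ 2\<bar> \<le> M * T / (4 * C)" if "t \<in> {0..T / 2}" for t
    by (rule periodic_switched_voltage_deviation[OF _ that]) (rule bound)
  have integral_bound: "\<bar>integral {0..T / 2} (\<lambda>t. Vdc / 2 - xp t $ 2)\<bar> \<le> M * T / (4 * C) * (T / 2 - 0)"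
    by (rule integral_bound[where f = "\<lambda>t. Vdc / 2 - xp t $ 2", unfolded real_norm_def])
      (use deviation pos(4) continuous_on_diff[OF continuous_on_const cont] in auto)
  have "\<bar>2 / (R * T) * integral {0..T / 2} (\<lambda>t. Vdc / 2 - xp t $ 2)\<bar>
          = 2 / (R * T) * \<bar>integral {0..T / 2} (\<lambda>t. Vdc / 2 - xp t $ 2)\<bar>"
    using pos by (simp add: abs_mult)
  also have "\<dots> \<le> 2 / (R * T) * (M * T / (4 * C) * (T / 2 - 0))"
    using integral_bound pos by (intro mult_left_mono) auto
  also have "\<dots> = T / (4 * R * C) * M"
    using pos by (simp add: field_simps)
  also have "\<dots> \<le> T / (2 * R * C) * M"
    using pos M_nonneg by (intro mult_right_mono) (auto simp: field_simps)
  finally show ?thesis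
    unfolding periodic_switched_current_average_offset M_def .
qed

end

theorem theorem2:
  fixes R L C Vdc T :: real and x xp :: "real \<Rightarrow> real^2"
  assumes "R > 0" "L > 0" "C > 0" "Vdc > 0" "T > 0"
    and sol: "is_switched_solution R L C Vdc T x"
    and psol: "is_switched_solution R L C Vdc T xp"
    and per: "\<forall>t\<ge>0. xp (t + T) = xp t"
  shows "has_average (\<lambda>t. x t $ 2) ((xp 0 $ 2 + xp (T / 2) $ 2) / 2)
       \<and> (xp 0 $ 2 + xp (T / 2) $ 2) / 2 = Vdc / 2
       \<and> has_average (\<lambda>t. x t $ 1) (2 * C / T * (Vdc - 2 * xp 0 $ 2))
       \<and> \<bar>2 * C / T * (Vdc - 2 * xp 0 $ 2) - Vdc / (2 * R)\<bar>
           \<le> T / (2 * R * C) * (SUP t\<in>{0..T/2}. \<bar>xp t $ 1\<bar>)"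
proof -
  note pos = assms(1,2,3,5)
  have voltage_mean: "(xp 0 $ 2 + xp (T / 2) $ 2) / 2 = Vdc / 2"
    using periodic_switched_solution_half_period_symmetry(2)[OF pos psol per, of 0] by simp
  have "has_average (\<lambda>t. x t $ 2) (Vdc / 2)"
    using has_average_periodic_switched_voltage[OF pos psol per]
    by (rule switched_solution_has_average_of_attractor[OF pos sol psol])
  moreover have "has_average (\<lambda>t. x t $ 1) (2 * C / T * (Vdc - 2 * xp 0 $ 2))"
    using has_average_periodic_switched_current[OF pos psol per]
    by (rule switched_solution_has_average_of_attractor[OF pos sol psol])
  ultimately show ?thesis
    unfolding voltage_mean using periodic_switched_current_average_deviation[OF pos psol per] by blast
qed

end
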